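(* Let $\alpha\in(0,2\pi)$ and $\rho\in\mathbb C$, and let $$S=\begin{pmatrix}\cos\frac{\alpha}{2} & ie^{\rho/2}\sin\frac{\alpha}{2}\\ ie^{-\rho/2}\sin\frac{\alpha}{2} & \cos\frac{\alpha}{2}\end{pmatrix},\qquad T=\begin{pmatrix}\cos\frac{\alpha}{2} & ie^{-\rho/2}\sin\frac{\alpha}{2}\\ ie^{\rho/2}\sin\frac{\alpha}{2} & \cos\frac{\alpha}{2}\end{pmatrix}.$$ Put $A=\cot\frac{\alpha}{2}$, $V=\cosh\rho$ and $W=S^{-1}(STS^{-1}T^{-1})^2(ST^{-1}S^{-1}T)^2$. If $P(V,A)=0$, where $$P(V,A)=8V^5+8A^2V^4+(8A^4+16A^2-8)V^3+(4A^6+8A^4-12A^2)V^2+(A^8+4A^6-2A^4-12A^2+1)V-4A^6-8A^4+4A^2,$$ then $SWS^{-1}W^{-1}=I$, i.e. $s\mapsto S$, $t\mapsto T$ defines a representation $h$ of $\pi_1(X)=\langle s,t\mid sws^{-1}w^{-1}=1\rangle$, $w=s^{-1}[s,t]^2[s,t^{-1}]^2$, into $\mathrm{SL}(2,\mathbb C)$.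
   Context: $X$ is the complement of the link $7_3^2$ (slope $9/16$ version), with fundamental group $\pi_1(X)=\langle s,t\mid sws^{-1}w^{-1}=1\rangle$, $w=s^{-1}[s,t]^2[s,t^{-1}]^2$, and commutator convention $[a,b]=aba^{-1}b^{-1}$. The polynomial $P$ is called the Riley–Mednykh polynomial of the link $7_3^2$. *)

theory Defs
  imports "HOL-Analysis.Analysis"
begin

type_synonym cmat2 = "complex^2^2"

definition mat2 :: "complex \<Rightarrow> complex \<Rightarrow> complex \<Rightarrow> complex \<Rightarrow> cmat2" where
  "mat2 a b c d = vector [vector [a, b], vector [c, d]]"

definition S_mat :: "real \<Rightarrow> complex \<Rightarrow> cmat2" where
  "S_mat \<alpha> \<rho> = mat2 (of_real (cos (\<alpha>/2))) (\<i> * exp (\<rho>/2) * of_real (sin (\<alpha>/2)))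
                        (\<i> * exp (-\<rho>/2) * of_real (sin (\<alpha>/2))) (of_real (cos (\<alpha>/2)))"

definition T_mat :: "real \<Rightarrow> complex \<Rightarrow> cmat2" where
  "T_mat \<alpha> \<rho> = mat2 (of_real (cos (\<alpha>/2))) (\<i> * exp (-\<rho>/2) * of_real (sin (\<alpha>/2)))
                        (\<i> * exp (\<rho>/2) * of_real (sin (\<alpha>/2))) (of_real (cos (\<alpha>/2)))"

text \<open>Riley--Mednykh polynomial of the link 7_3^2.\<close>
definition RM_poly :: "complex \<Rightarrow> complex \<Rightarrow> complex" where
  "RM_poly V A = 8*V^5 + 8*A^2*V^4 + (8*A^4 + 16*A^2 - 8)*V^3 + (4*A^6 + 8*A^4 - 12*A^2)*V^2
     + (A^8 + 4*A^6 - 2*A^4 - 12*A^2 + 1)*V - 4*A^6 - 8*A^4 + 4*A^2"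

definition W_mat :: "cmat2 \<Rightarrow> cmat2 \<Rightarrow> cmat2" where
  "W_mat S T = (let Si = matrix_inv S; Ti = matrix_inv T;
                    c1 = S ** T ** Si ** Ti; c2 = S ** Ti ** Si ** T
                in Si ** (c1 ** c1) ** (c2 ** c2))"

end

theory Submission
  imports Defs
begin

text \<open>With \<open>x = e\<^sup>\<rho>\<^sup>/\<^sup>2\<close>, \<open>s = sin (\<alpha>/2)\<close> and \<open>A = cot (\<alpha>/2)\<close>, the matrix S is
  \<open>s (A I + J)\<close> for \<open>J = [[0, i x], [i/x, 0]]\<close>, so S commutes with every matrix \<open>p I + q J\<close>.
  Since \<open>W = S\<^sup>-\<^sup>1 V\<close> with \<open>V = [S,T]\<^sup>2 [S,T\<^sup>-\<^sup>1]\<^sup>2\<close>, it suffices that V has this shape.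
  Once scalars and the factors \<open>i x\<close>, \<open>i/x\<close> of the off-diagonal entries are split off, all
  matrices involved have integer polynomial entries in A and \<open>y = e\<^sup>\<rho>\<close>, and the two conditions
  on the entries of V turn out to be multiples of \<open>P(cosh \<rho>, A)\<close>.\<close>

lemma matrix_inv_eqI:
  fixes A B :: "'a::field^'n^'n"
  assumes "A ** B = mat 1"
  shows "matrix_inv A = B"
proof -
  have BA: "B ** A = mat 1"
    using assms matrix_left_right_inverse by blast
  have "A ** matrix_inv A = mat 1 \<and> matrix_inv A ** A = mat 1"
    unfolding matrix_inv_def by (rule someI[of _ B]) (use assms BA in blast)
  then show ?thesis
    by (metis BA matrix_mul_assoc matrix_mul_lid matrix_mul_rid)
qed

lemma matrix_inv_right:
  fixes A :: "'a::field^'n^'n"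
  assumes "invertible A"
  shows "A ** matrix_inv A = mat 1"
  using assms matrix_inv_eqI unfolding invertible_def by metis

lemma invertible_matrix_inv:
  fixes A :: "'a::field^'n^'n"
  assumes "invertible A"
  shows "invertible (matrix_inv A)"
  using assms matrix_inv_right invertible_left_inverse by blast

lemma invertible_W_mat:
  assumes "invertible S" "invertible T"
  shows "invertible (W_mat S T)"
  using assms by (simp add: W_mat_def Let_def invertible_mult invertible_matrix_inv)

lemma commutator_eq_mat_1:
  fixes A B :: "'a::field^'n^'n"
  assumes "invertible A" "invertible B" "A ** B = B ** A"
  shows "A ** B ** matrix_inv A ** matrix_inv B = mat 1"
proof -
  have "A ** B ** matrix_inv A ** matrix_inv B = B ** (A ** matrix_inv A) ** matrix_inv B"
    by (simp add: assms(3) matrix_mul_assoc)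
  also have "\<dots> = mat 1"
    by (simp add: assms(1,2) matrix_inv_right)
  finally show ?thesis .
qed

lemma mat2_mult:
  "mat2 a b c d ** mat2 e f g h = mat2 (a*e + b*g) (a*f + b*h) (c*e + d*g) (c*f + d*h)"
  by (simp add: mat2_def matrix_matrix_mult_def vec_eq_iff forall_2 sum_2)

lemma mat2_one: "mat 1 = mat2 1 0 0 1"
  by (simp add: mat2_def mat_def vec_eq_iff forall_2)

text \<open>These matrices form a subalgebra containing S and T (for \<open>x = e\<^sup>\<rho>\<^sup>/\<^sup>2\<close>); splitting off
  k, \<open>\<i>\<close> and x keeps the entries of words in S and T integer polynomials in \<open>cot (\<alpha>/2)\<close> and \<open>e\<^sup>\<rho>\<close>.\<close>
definition riley_mat :: "complex \<Rightarrow> complex \<Rightarrow> complex \<Rightarrow> complex \<Rightarrow> complex \<Rightarrow> complex \<Rightarrow> cmat2" where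
  "riley_mat x k a b c d = mat2 (k * a) (k * \<i> * x * b) (k * \<i> * c / x) (k * d)"

lemma riley_mat_mult:
  assumes "x \<noteq> 0"
  shows "riley_mat x k a b c d ** riley_mat x l e f g h
       = riley_mat x (k*l) (a*e - b*g) (a*f + b*h) (c*e + d*g) (d*h - c*f)"
  using assms by (simp add: riley_mat_def mat2_mult) (simp add: field_simps)

lemma riley_mat_inverse:
  assumes "x \<noteq> 0" "k * k' * (a*d + b*c) = 1"
  shows "riley_mat x k a b c d ** riley_mat x k' d (-b) (-c) a = mat 1"
    and "riley_mat x k' d (-b) (-c) a ** riley_mat x k a b c d = mat 1"
    and "matrix_inv (riley_mat x k a b c d) = riley_mat x k' d (-b) (-c) a"
    and "invertible (riley_mat x k a b c d)"
proof -
  show right: "riley_mat x k a b c d ** riley_mat x k' d (-b) (-c) a = mat 1"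
    unfolding riley_mat_mult[OF assms(1)] using assms(2)
    by (simp add: riley_mat_def mat2_one algebra_simps)
  then show "riley_mat x k' d (-b) (-c) a ** riley_mat x k a b c d = mat 1"
    using matrix_left_right_inverse by blast
  from right show "matrix_inv (riley_mat x k a b c d) = riley_mat x k' d (-b) (-c) a"
    and "invertible (riley_mat x k a b c d)"
    by (auto simp: matrix_inv_eqI invertible_right_inverse)
qed

lemma riley_mat_symmetric_commute:
  assumes "x \<noteq> 0"
  shows "riley_mat x k a b b a ** riley_mat x l p q q p = riley_mat x l p q q p ** riley_mat x k a b b a"
  using assms by (simp add: riley_mat_mult algebra_simps)

lemma riley_commutator_S_T:
  assumes "x \<noteq> 0"
  shows "riley_mat x k A 1 1 A ** riley_mat x l (A*y) 1 (y^2) (A*y)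
           ** riley_mat x k A (-1) (-1) A ** riley_mat x l (A*y) (-1) (-(y^2)) (A*y)
       = riley_mat x (k*l*k*l) (y^4 + A^2*y + 2*A^2*y^2 - A^2*y^3 + A^4*y^2)
           (- A - A*y + A*y^2 + A*y^3) (A*y + A*y^2 - A*y^3 - A*y^4)
           (1 - A^2*y + 2*A^2*y^2 + A^2*y^3 + A^4*y^2)"
  unfolding riley_mat_mult[OF assms]
  by (simp add: algebra_simps power2_eq_square power3_eq_cube power4_eq_xxxx)

lemma riley_commutator_S_T_inv:
  assumes "x \<noteq> 0"
  shows "riley_mat x k A 1 1 A ** riley_mat x l (A*y) (-1) (-(y^2)) (A*y)
           ** riley_mat x k A (-1) (-1) A ** riley_mat x l (A*y) 1 (y^2) (A*y)
       = riley_mat x (k*l*k*l) (y^4 - A^2*y + 2*A^2*y^2 + A^2*y^3 + A^4*y^2)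
           (- A + A*y + A*y^2 - A*y^3) (- A*y + A*y^2 + A*y^3 - A*y^4)
           (1 + A^2*y + 2*A^2*y^2 - A^2*y^3 + A^4*y^2)"
  unfolding riley_mat_mult[OF assms]
  by (simp add: algebra_simps power2_eq_square power3_eq_cube power4_eq_xxxx)

lemma riley_mat_commute_square_product:
  fixes x k K A a b c d a' b' c' d' :: complex
  assumes x: "x \<noteq> 0"
    and diag: "(a*a - b*c)*(a'*a' - b'*c') - (a*b + b*d)*(c'*a' + d'*c')
             = (d*d - c*b)*(d'*d' - c'*b') - (c*a + d*c)*(a'*b' + b'*d')"
    and off_diag: "(a*a - b*c)*(a'*b' + b'*d') + (a*b + b*d)*(d'*d' - c'*b')
             = (c*a + d*c)*(a'*a' - b'*c') + (d*d - c*b)*(c'*a' + d'*c')"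
  defines "C \<equiv> riley_mat x K a b c d" and "C' \<equiv> riley_mat x K a' b' c' d'"
  shows "riley_mat x k A 1 1 A ** (C ** C ** (C' ** C')) = C ** C ** (C' ** C') ** riley_mat x k A 1 1 A"
proof -
  obtain K' p q where "C ** C ** (C' ** C') = riley_mat x K' p q q p"
    unfolding C_def C'_def riley_mat_mult[OF x] diag off_diag by blast
  then show ?thesis
    by (simp only: riley_mat_symmetric_commute[OF x])
qed

text \<open>Both differences are multiples of \<open>(y\<^sup>2 - 1)(y\<^sup>4 + 2A\<^sup>2(A\<^sup>2 + 2)y\<^sup>2 + 1) y\<^sup>5 P(V, A)\<close>
  once \<open>2 y V = y\<^sup>2 + 1\<close>.\<close>
lemma riley_word_identities:
  fixes A y V :: complex
  assumes "2 * y * V = y^2 + 1" and "RM_poly V A = 0"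
  defines "a \<equiv> y^4 + A^2*y + 2*A^2*y^2 - A^2*y^3 + A^4*y^2"
    and "b \<equiv> - A - A*y + A*y^2 + A*y^3" and "c \<equiv> A*y + A*y^2 - A*y^3 - A*y^4"
    and "d \<equiv> 1 - A^2*y + 2*A^2*y^2 + A^2*y^3 + A^4*y^2"
    and "a' \<equiv> y^4 - A^2*y + 2*A^2*y^2 + A^2*y^3 + A^4*y^2"
    and "b' \<equiv> - A + A*y + A*y^2 - A*y^3" and "c' \<equiv> - A*y + A*y^2 + A*y^3 - A*y^4"
    and "d' \<equiv> 1 + A^2*y + 2*A^2*y^2 - A^2*y^3 + A^4*y^2"
  shows "(a*a - b*c)*(a'*a' - b'*c') - (a*b + b*d)*(c'*a' + d'*c')
       = (d*d - c*b)*(d'*d' - c'*b') - (c*a + d*c)*(a'*b' + b'*d')"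
    and "(a*a - b*c)*(a'*b' + b'*d') + (a*b + b*d)*(d'*d' - c'*b')
       = (c*a + d*c)*(a'*a' - b'*c') + (d*d - c*b)*(c'*a' + d'*c')"
  using assms(1,2)
  unfolding a_def b_def c_def d_def a'_def b'_def c'_def d'_def RM_poly_def by algebra+

lemma riley_mat_relator:
  fixes x k l A y V :: complex
  assumes x: "x \<noteq> 0" and k: "k^2 * (A^2 + 1) = 1" and l: "(l*y)^2 * (A^2 + 1) = 1"
    and V_eq: "2 * y * V = y^2 + 1" and RM: "RM_poly V A = 0"
  defines "S \<equiv> riley_mat x k A 1 1 A" and "T \<equiv> riley_mat x l (A*y) 1 (y^2) (A*y)"
  shows "S ** W_mat S T ** matrix_inv S ** matrix_inv (W_mat S T) = mat 1"
proof -
  define S' where "S' = riley_mat x k A (-1) (-1) A"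
  define T' where "T' = riley_mat x l (A*y) (-1) (-(y^2)) (A*y)"
  have "k * k * (A * A + 1 * 1) = 1" and "l * l * (A*y * (A*y) + 1 * y^2) = 1"
    using k l by (simp_all add: power2_eq_square algebra_simps)
  note S_inv = riley_mat_inverse[OF x this(1), folded S_def S'_def]
    and T_inv = riley_mat_inverse[OF x this(2), folded T_def T'_def]
  define U where "U = (S ** T ** S' ** T') ** (S ** T ** S' ** T')
                       ** ((S ** T' ** S' ** T) ** (S ** T' ** S' ** T))"
  have "S ** U = U ** S"
    unfolding U_def S_def T_def S'_def T'_def
      riley_commutator_S_T[OF x] riley_commutator_S_T_inv[OF x]
    by (rule riley_mat_commute_square_product[OF x riley_word_identities[OF V_eq RM]])
  moreover have "W_mat S T = S' ** U"
    by (simp add: W_mat_def S_inv T_inv U_def matrix_mul_assoc)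
  ultimately have "S ** W_mat S T = W_mat S T ** S"
    using S_inv by (metis matrix_mul_assoc matrix_mul_lid matrix_mul_rid)
  then show ?thesis
    by (rule commutator_eq_mat_1[rotated 2]) (simp_all add: S_inv T_inv invertible_W_mat)
qed

lemma cos_eq_sin_mult_cot: "sin t \<noteq> 0 \<Longrightarrow> cos t = sin t * cot t"
  by (simp add: cot_def)

lemma sin_sq_mult_cot_sq_plus_1: "sin t \<noteq> 0 \<Longrightarrow> (sin t)^2 * ((cot t)^2 + 1) = 1"
  by (simp add: cot_def field_simps)

lemma S_mat_eq_riley_mat:
  assumes "sin (\<alpha>/2) \<noteq> 0"
  shows "S_mat \<alpha> \<rho> = riley_mat (exp (\<rho>/2)) (of_real (sin (\<alpha>/2))) (of_real (cot (\<alpha>/2)))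
           1 1 (of_real (cot (\<alpha>/2)))"
  using assms
  by (simp add: S_mat_def riley_mat_def cos_eq_sin_mult_cot exp_minus inverse_eq_divide mult_ac
      flip: of_real_mult)

lemma T_mat_eq_riley_mat:
  assumes "sin (\<alpha>/2) \<noteq> 0"
  shows "T_mat \<alpha> \<rho> = riley_mat (exp (\<rho>/2)) (of_real (sin (\<alpha>/2)) / exp \<rho>)
           (of_real (cot (\<alpha>/2)) * exp \<rho>) 1 ((exp \<rho>)^2) (of_real (cot (\<alpha>/2)) * exp \<rho>)"
proof -
  have "exp \<rho> = exp (\<rho>/2)^2"
    by (simp add: power2_eq_square flip: exp_add)
  then show ?thesis
    using assms
    by (simp add: T_mat_def riley_mat_def cos_eq_sin_mult_cot exp_minus field_simps
        power2_eq_square flip: of_real_mult)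
qed

lemma cosh_exp_relation: "2 * exp z * cosh z = (exp z)^2 + (1::complex)"
  by (simp add: cosh_field_def field_simps power2_eq_square exp_minus)

theorem theorem3p2:
  fixes \<alpha> :: real and \<rho> :: complex
  assumes "0 < \<alpha>" and "\<alpha> < 2 * pi"
    and "RM_poly (cosh \<rho>) (of_real (cot (\<alpha>/2))) = 0"
  shows "S_mat \<alpha> \<rho> ** W_mat (S_mat \<alpha> \<rho>) (T_mat \<alpha> \<rho>) ** matrix_inv (S_mat \<alpha> \<rho>)
           ** matrix_inv (W_mat (S_mat \<alpha> \<rho>) (T_mat \<alpha> \<rho>)) = mat 1"
proof -
  have sin: "sin (\<alpha>/2) \<noteq> 0"
    using assms(1,2) sin_gt_zero[of "\<alpha>/2"] by auto
  have scalar: "(complex_of_real (sin (\<alpha>/2)))^2 * ((complex_of_real (cot (\<alpha>/2)))^2 + 1) = 1"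
    using arg_cong[OF sin_sq_mult_cot_sq_plus_1[OF sin], of complex_of_real] by simp
  show ?thesis
    unfolding S_mat_eq_riley_mat[OF sin] T_mat_eq_riley_mat[OF sin]
    by (rule riley_mat_relator) (use scalar cosh_exp_relation assms(3) in simp_all)
qed

end
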